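(* Let $\beta=\beta(\alpha)$ be a real function of $\alpha$ such that $c(\alpha)=\alpha-\beta(\alpha)$ satisfies $-1<c(\alpha)\le M$ for some constant $M$ and all large $\alpha$. Then, as $\alpha\to\infty$, \[ I(\alpha,\beta)\sim\left(\frac{6}{\alpha}\right)^{\frac{\alpha-\beta+1}{2}}\Gamma\!\left(\frac{\alpha-\beta+1}{2}\right), \] i.e. the ratio of the two sides tends to $1$. In particular, \[ I(\alpha,[\alpha])\sim\left(\frac{6}{\alpha}\right)^{\frac{\alpha-[\alpha]+1}{2}}\Gamma\!\left(\frac{\alpha-[\alpha]+1}{2}\right),\qquad \alpha\to\infty, \] where $[\alpha]$ denotes the greatest integer not exceeding $\alpha$.
   Context: For real $\alpha,\beta$ with $\alpha>\beta-1>0$, $I(\alpha,\beta)=\int_{-\infty}^{\infty}|\sin t|^{\alpha}|t|^{-\beta}\,dt$; $\Gamma$ denotes the gamma function. *)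

theory Defs
  imports "HOL-Analysis.Analysis"
begin

text \<open>I(alpha,beta) = integral over the real line of abs(sin t)^alpha * abs t^(-beta),
  as a Lebesgue integral w.r.t. Lebesgue-Borel measure (the point t = 0 is a null set).\<close>
definition I_int :: "real \<Rightarrow> real \<Rightarrow> real" where
  "I_int \<alpha> \<beta> = (LBINT t. \<bar>sin t\<bar> powr \<alpha> * \<bar>t\<bar> powr (-\<beta>))"

end

theory Submission
  imports Defs "HOL-Real_Asymp.Real_Asymp"
begin

text \<open>
  Write \<open>\<beta> = \<alpha> - c\<close>. Near the origin \<open>sin t / t = exp (- t\<^sup>2 / 6 + O(t\<^sup>4))\<close>, so the
  integrand \<open>\<bar>sin t\<bar> powr \<alpha> * \<bar>t\<bar> powr (-\<beta>) = (sin t / t) powr \<alpha> * t powr c\<close> is close to the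
  Gaussian moment \<open>t powr c * exp (- \<alpha> t\<^sup>2 / 6)\<close>, whose integral over \<open>[0, \<infinity>)\<close> is
  \<open>\<Gamma>((c + 1) / 2) / (2 (\<alpha> / 6) powr ((c + 1) / 2))\<close>, half the claimed asymptotic value.
  Split the half-line at \<open>\<delta> = \<alpha> powr (-1/3)\<close> and \<open>3/2\<close>: on \<open>[0, \<delta>]\<close> the quartic error
  contributes a factor \<open>exp (O(\<alpha> \<delta>\<^sup>4)) \<rightarrow> 1\<close>, on \<open>[\<delta>, 3/2]\<close> the integrand is
  \<open>O(exp (- \<alpha> \<delta>\<^sup>2 / 7) / \<delta>)\<close>, and beyond \<open>3/2\<close> it is at most \<open>t powr (-\<beta>)\<close>. Both remainders
  are exponentially small compared with the Gaussian moment, which is bounded below by a power of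
  \<open>1 / \<alpha>\<close>, and the ratio is squeezed to \<open>1\<close>. The floor case is \<open>c = \<alpha> - \<lfloor>\<alpha>\<rfloor> \<in> [0, 1)\<close>.
\<close>

section \<open>Gaussian moments\<close>

definition gauss_moment :: "real \<Rightarrow> real \<Rightarrow> real \<Rightarrow> real" where
  "gauss_moment k c t = t powr c * exp (- k * t\<^sup>2)"
  \<comment> \<open>\<open>0 powr c = 0\<close>, so \<open>gauss_moment k c 0 = 0\<close> even for \<open>c < 0\<close>.\<close>

definition gauss_moment_integral :: "real \<Rightarrow> real \<Rightarrow> real" where
  "gauss_moment_integral k c = Gamma ((c + 1) / 2) / (2 * k powr ((c + 1) / 2))"

lemma gauss_moment_nonneg: "gauss_moment k c t \<ge> 0"
  by (simp add: gauss_moment_def)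

lemma gauss_moment_integral_pos: "k > 0 \<Longrightarrow> c > -1 \<Longrightarrow> gauss_moment_integral k c > 0"
  by (simp add: gauss_moment_integral_def)

lemma Gamma_integrand_substitution:
  fixes k x s :: real
  assumes k: "k > 0" and x: "x \<ge> 0"
  shows "\<bar>2 * k * x\<bar> * ((k * x\<^sup>2) powr (s - 1) / exp (k * x\<^sup>2))
           = 2 * k powr s * gauss_moment k (2 * s - 1) x"
proof (cases "x = 0")
  case False
  with x have x: "x > 0" by simp
  have "(x\<^sup>2) powr (s - 1) = (x powr 2) powr (s - 1)"
    using x by simp
  also have "\<dots> = x powr (2 * s - 2)"
    by (simp add: powr_powr algebra_simps)
  finally have "\<bar>2 * k * x\<bar> * (k * x\<^sup>2) powr (s - 1)
      = 2 * (k * k powr (s - 1)) * (x * x powr (2 * s - 2))"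
    using k x by (simp add: powr_mult abs_mult mult_ac)
  also have "\<dots> = 2 * k powr s * x powr (2 * s - 1)"
    using k x by (simp add: powr_mult_base)
  finally show ?thesis
    by (simp add: gauss_moment_def exp_minus divide_inverse mult_ac)
qed (simp add: gauss_moment_def)

lemma gauss_moment_has_integral:
  assumes k: "k > 0" and c: "c > -1"
  shows "(gauss_moment k c has_integral gauss_moment_integral k c) {0..}"
proof -
  define s where "s = (c + 1) / 2"
  have s: "s > 0" and c_eq: "c = 2 * s - 1"
    using c by (simp_all add: s_def field_simps)
  define f where "f = (\<lambda>u::real. u powr (s - 1) / exp u)"
  have "(f has_integral Gamma s) {0..}"
    unfolding f_def by (rule Gamma_integral_real[OF s])
  moreover have "f absolutely_integrable_on {0..}"
    using calculation by (intro nonnegative_absolutely_integrable_1) (auto simp: f_def)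
  moreover have "(\<lambda>t. k * t\<^sup>2) ` {0..} = {0..}"
  proof (intro equalityI subsetI)
    fix u :: real assume "u \<in> {0..}"
    then show "u \<in> (\<lambda>t. k * t\<^sup>2) ` {0..}"
      using k by (intro image_eqI[where x = "sqrt (u / k)"]) auto
  qed (use k in auto)
  moreover have "inj_on (\<lambda>t. k * t\<^sup>2) {0..}"
    using k by (intro inj_onI) (auto simp: power2_eq_imp_eq)
  moreover have "((\<lambda>t. k * t\<^sup>2) has_real_derivative 2 * k * x) (at x within {0..})" for x
    by (auto intro!: derivative_eq_intros)
  ultimately have "(\<lambda>x. \<bar>2 * k * x\<bar> * f (k * x\<^sup>2)) absolutely_integrable_on {0..}
      \<and> integral {0..} (\<lambda>x. \<bar>2 * k * x\<bar> * f (k * x\<^sup>2)) = Gamma s"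
    using has_absolute_integral_change_of_variables_1'[of "{0..}" "\<lambda>t. k * t\<^sup>2" "\<lambda>x. 2 * k * x" f]
    by (simp add: integral_unique)
  then have "((\<lambda>x. \<bar>2 * k * x\<bar> * f (k * x\<^sup>2)) has_integral Gamma s) {0..}"
    by (metis absolutely_integrable_on_def has_integral_integral)
  then have "((\<lambda>x. 2 * k powr s * gauss_moment k c x) has_integral Gamma s) {0..}"
    by (rule has_integral_spike_eq[OF negligible_empty, THEN iffD1, rotated])
       (simp add: f_def c_eq Gamma_integrand_substitution[OF k, symmetric])
  from has_integral_mult_right[OF this, of "inverse (2 * k powr s)"] show ?thesis
    using k by (simp add: gauss_moment_integral_def s_def field_simps)
qed

lemma gauss_moment_integrable_on:
  "k > 0 \<Longrightarrow> c > -1 \<Longrightarrow> gauss_moment k c integrable_on {0..b}"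
  by (rule integrable_on_subinterval[OF has_integral_integrable[OF gauss_moment_has_integral]]) auto

lemma integral_gauss_moment_le:
  assumes "k > 0" "c > -1"
  shows "integral {0..b} (gauss_moment k c) \<le> gauss_moment_integral k c"
proof -
  have "integral {0..b} (gauss_moment k c) \<le> integral {0..} (gauss_moment k c)"
    using gauss_moment_has_integral[OF assms]
    by (intro integral_subset_le) (auto intro: integrable_on_subinterval simp: gauss_moment_nonneg)
  then show ?thesis
    using gauss_moment_has_integral[OF assms] by (simp add: integral_unique)
qed

lemma gauss_moment_integral_half:
  assumes "k > 0"
  shows "gauss_moment_integral (k / 2) c = 2 powr ((c + 1) / 2) * gauss_moment_integral k c"
  using assms by (simp add: gauss_moment_integral_def powr_divide)

lemma gauss_moment_integral_le_initial_part:
  assumes k: "k > 0" and c: "c > -1" and \<delta>: "\<delta> \<ge> 0"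
  shows "gauss_moment_integral k c
    \<le> integral {0..\<delta>} (gauss_moment k c) + exp (- (k * \<delta>\<^sup>2 / 2)) * gauss_moment_integral (k / 2) c"
proof -
  have near: "((\<lambda>t. if t \<in> {0..\<delta>} then gauss_moment k c t else 0) has_integral
      integral {0..\<delta>} (gauss_moment k c)) {0..}"
    using gauss_moment_integrable_on[OF k c] \<delta>
    by (subst has_integral_restrict_Int) (simp add: Int_absorb2 integrable_integral)
  have far: "((\<lambda>t. exp (- (k * \<delta>\<^sup>2 / 2)) * gauss_moment (k / 2) c t) has_integral
      exp (- (k * \<delta>\<^sup>2 / 2)) * gauss_moment_integral (k / 2) c) {0..}"
    using k c by (intro has_integral_mult_right gauss_moment_has_integral) auto
  have "gauss_moment k c t
      \<le> (if t \<in> {0..\<delta>} then gauss_moment k c t else 0) + exp (- (k * \<delta>\<^sup>2 / 2)) * gauss_moment (k / 2) c t"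
    if "t \<in> {0..}" for t
  proof (cases "t \<le> \<delta>")
    case True
    then show ?thesis
      using that by (simp add: gauss_moment_nonneg)
  next
    case False
    then have "\<delta>\<^sup>2 \<le> t\<^sup>2"
      using \<delta> by (intro power_mono) auto
    then have "k * \<delta>\<^sup>2 \<le> k * t\<^sup>2"
      using k by (intro mult_left_mono) auto
    then have "exp (- k * t\<^sup>2) \<le> exp (- (k * \<delta>\<^sup>2 / 2)) * exp (- (k / 2) * t\<^sup>2)"
      unfolding exp_add[symmetric] by simp
    then show ?thesis
      using False by (simp add: gauss_moment_def mult_left_mono mult.left_commute)
  qed
  then show ?thesis
    by (rule has_integral_le[OF gauss_moment_has_integral[OF k c] has_integral_add[OF near far]])
qed

lemma gauss_moment_initial_part_ge:
  assumes k: "k > 0" and c: "-1 < c" "c \<le> M" and \<delta>: "\<delta> \<ge> 0"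
  shows "(1 - exp (- (k * \<delta>\<^sup>2 / 2)) * 2 powr ((M + 1) / 2)) * gauss_moment_integral k c
    \<le> integral {0..\<delta>} (gauss_moment k c)"
proof -
  define H where "H = gauss_moment_integral k c"
  have "gauss_moment_integral (k / 2) c = 2 powr ((c + 1) / 2) * H"
    unfolding H_def using k by (rule gauss_moment_integral_half)
  also have "\<dots> \<le> 2 powr ((M + 1) / 2) * H"
    using k c gauss_moment_integral_pos[of k c] by (intro mult_right_mono) (auto simp: H_def)
  finally have "exp (- (k * \<delta>\<^sup>2 / 2)) * gauss_moment_integral (k / 2) c
      \<le> exp (- (k * \<delta>\<^sup>2 / 2)) * 2 powr ((M + 1) / 2) * H"
    by (simp add: mult.assoc mult_left_mono)
  moreover have "H \<le> integral {0..\<delta>} (gauss_moment k c)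
      + exp (- (k * \<delta>\<^sup>2 / 2)) * gauss_moment_integral (k / 2) c"
    using gauss_moment_integral_le_initial_part[OF k c(1) \<delta>] by (simp add: H_def)
  ultimately show ?thesis
    unfolding H_def[symmetric] left_diff_distrib mult_1_left by linarith
qed

lemma gauss_moment_integral_ge:
  assumes k: "k \<ge> 1" and c: "-1 < c" "c \<le> M"
  shows "exp (-1) * k powr (- ((M + 1) / 2)) / (M + 1) \<le> gauss_moment_integral k c"
proof -
  define \<sigma> where "\<sigma> = k powr (-1 / 2)"
  have \<sigma>: "0 < \<sigma>" "\<sigma> \<le> 1"
    using k powr_mono[of "-1 / 2" 0 k] by (auto simp: \<sigma>_def)
  have "exp (-1) * k powr (- ((M + 1) / 2)) / (M + 1) = exp (-1) * (\<sigma> powr (M + 1) / (M + 1))"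
    by (simp add: \<sigma>_def powr_powr)
  also have "\<dots> \<le> exp (-1) * (\<sigma> powr (c + 1) / (c + 1))"
    using c \<sigma> by (intro mult_left_mono frac_le powr_mono') auto
  also have "\<dots> \<le> integral {0..\<sigma>} (gauss_moment k c)"
  proof (rule has_integral_le)
    show "((\<lambda>t. exp (-1) * t powr c) has_integral exp (-1) * (\<sigma> powr (c + 1) / (c + 1))) {0..\<sigma>}"
      using c \<sigma> by (intro has_integral_mult_right has_integral_powr_from_0) auto
    show "(gauss_moment k c has_integral integral {0..\<sigma>} (gauss_moment k c)) {0..\<sigma>}"
      using k c by (intro integrable_integral gauss_moment_integrable_on) auto
    show "exp (-1) * t powr c \<le> gauss_moment k c t" if "t \<in> {0..\<sigma>}" for t
    proof -
      have "t\<^sup>2 \<le> \<sigma>\<^sup>2"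
        using that by (intro power_mono) auto
      also have "\<sigma>\<^sup>2 = 1 / k"
        using k by (simp add: \<sigma>_def powr_minus_divide powr_half_sqrt power_divide)
      finally have "exp (-1) \<le> exp (- k * t\<^sup>2)"
        using k by (simp add: field_simps)
      from mult_right_mono[OF this, of "t powr c"] show ?thesis
        by (simp add: gauss_moment_def mult.commute)
    qed
  qed
  also have "\<dots> \<le> gauss_moment_integral k c"
    using k c by (intro integral_gauss_moment_le) auto
  finally show ?thesis .
qed

lemma sin_cubic_approx:
  fixes t :: real
  shows "\<bar>sin t - (t - t ^ 3 / 6)\<bar> \<le> \<bar>t\<bar> ^ 5 / 120"
proof -
  have "(\<Sum>m<5. sin_coeff m * t ^ m) = t - t ^ 3 / 6"
    by (simp add: lessThan_nat_numeral sin_coeff_def fact_numeral)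
  then show ?thesis
    using Maclaurin_sin_bound[of t 5] by (simp add: fact_numeral)
qed

lemma sinc_quadratic_approx:
  fixes t :: real
  assumes "t > 0"
  shows "\<bar>sin t / t - (1 - t\<^sup>2 / 6)\<bar> \<le> t ^ 4 / 120"
proof -
  have "sin t / t - (1 - t\<^sup>2 / 6) = (sin t - (t - t ^ 3 / 6)) / t"
    using assms by (simp add: field_simps power_def)
  also have "\<bar>\<dots>\<bar> = \<bar>sin t - (t - t ^ 3 / 6)\<bar> / t"
    using assms by (simp add: abs_divide)
  also have "\<dots> \<le> (t ^ 5 / 120) / t"
    using sin_cubic_approx[of t] assms by (intro divide_right_mono) auto
  also have "\<dots> = t ^ 4 / 120"
    using assms by (simp add: power_def)
  finally show ?thesis .
qed

lemma sinc_le_exp: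
  fixes t :: real
  assumes "t > 0"
  shows "sin t / t \<le> exp (- t\<^sup>2 / 6 + t ^ 4 / 120)"
  using sinc_quadratic_approx[OF assms] exp_ge_add_one_self[of "- t\<^sup>2 / 6 + t ^ 4 / 120"]
  by linarith

lemma exp_neg_le_one_minus:
  fixes x :: real
  assumes "0 \<le> x" "x \<le> 1 / 2"
  shows "exp (- x - 2 * x\<^sup>2) \<le> 1 - x"
proof -
  have "exp (- x - 2 * x\<^sup>2) \<le> exp (ln (1 - x))"
    using ln_one_minus_pos_lower_bound[OF assms] by simp
  then show ?thesis
    using assms by simp
qed

lemma exp_le_sinc:
  fixes t :: real
  assumes t: "0 < t" "t \<le> 1"
  shows "exp (- t\<^sup>2 / 6 - t ^ 4 / 10) \<le> sin t / t"
proof -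
  define x where "x = t\<^sup>2 / 6 + t ^ 4 / 120"
  have "t ^ 4 \<le> t\<^sup>2" "t\<^sup>2 \<le> 1"
    using t power_decreasing[of 2 4 t] by (simp_all add: power_le_one)
  then have x: "0 \<le> x" "x \<le> 1 / 2" "x \<le> t\<^sup>2 * (21 / 120)"
    by (simp_all add: x_def)
  then have "x\<^sup>2 \<le> (t\<^sup>2 * (21 / 120))\<^sup>2"
    by (intro power_mono)
  also have "\<dots> = t ^ 4 * (441 / 14400)"
    by (simp add: power2_eq_square power4_eq_xxxx)
  finally have "x\<^sup>2 \<le> t ^ 4 * (441 / 14400)" .
  moreover have "0 \<le> t ^ 4"
    by simp
  ultimately have "- t\<^sup>2 / 6 - t ^ 4 / 10 \<le> - x - 2 * x\<^sup>2"
    using x_def by linarith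
  then have "exp (- t\<^sup>2 / 6 - t ^ 4 / 10) \<le> exp (- x - 2 * x\<^sup>2)"
    by simp
  also have "\<dots> \<le> 1 - x"
    using x by (intro exp_neg_le_one_minus)
  also have "\<dots> \<le> sin t / t"
    using sinc_quadratic_approx[OF t(1)] unfolding x_def by linarith
  finally show ?thesis .
qed

lemma quartic_exponent_le:
  fixes t \<delta> :: real
  assumes "0 \<le> \<delta>" "\<delta> \<le> t" "t \<le> 3 / 2"
  shows "- t\<^sup>2 / 6 + t ^ 4 / 120 \<le> - (\<delta>\<^sup>2 / 7)"
proof -
  have "t\<^sup>2 \<le> (3 / 2)\<^sup>2" and \<delta>t: "\<delta>\<^sup>2 \<le> t\<^sup>2"
    using assms by (intro power_mono; simp)+
  then have "t\<^sup>2 * t\<^sup>2 \<le> 9 / 4 * t\<^sup>2"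
    by (intro mult_right_mono) (simp_all add: power2_eq_square)
  moreover have "t ^ 4 = t\<^sup>2 * t\<^sup>2"
    by algebra
  ultimately show ?thesis
    using \<delta>t zero_le_power2[of \<delta>] by linarith
qed

lemma powr_le_inverse_plus_powr:
  fixes t c M \<delta> b :: real
  assumes t: "0 < \<delta>" "\<delta> \<le> t" "t \<le> b" and c: "-1 \<le> c" "c \<le> M" and M: "0 \<le> M"
  shows "t powr c \<le> 1 / \<delta> + b powr M"
proof (cases "t \<le> 1")
  case True
  have "t powr c \<le> t powr (-1)"
    using t c True by (intro powr_mono') auto
  also have "\<dots> = inverse t"
    using t by (simp add: powr_minus)
  also have "\<dots> \<le> inverse \<delta>"
    using t by (intro le_imp_inverse_le) auto
  finally show ?thesis
    by (simp add: inverse_eq_divide add_increasing2)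
next
  case False
  then have "t powr c \<le> t powr M"
    using c by (intro powr_mono) auto
  also have "\<dots> \<le> b powr M"
    using t M False by (intro powr_mono2) auto
  finally show ?thesis
    using t by (simp add: add_increasing)
qed

definition I_integrand :: "real \<Rightarrow> real \<Rightarrow> real \<Rightarrow> real" where
  "I_integrand a b t = \<bar>sin t\<bar> powr a * \<bar>t\<bar> powr (-b)"

lemma I_integrand_nonneg: "I_integrand a b t \<ge> 0"
  by (simp add: I_integrand_def)

lemma I_integrand_zero [simp]: "I_integrand a b 0 = 0"
  by (simp add: I_integrand_def)

lemma I_integrand_minus: "I_integrand a b (-t) = I_integrand a b t"
  by (simp add: I_integrand_def)

lemma I_integrand_borel_measurable: "I_integrand a b \<in> borel_measurable borel"
  unfolding I_integrand_def by measurable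

lemma I_int_eq_twice_half_line:
  assumes int: "I_integrand a b integrable_on {0..}"
  shows "I_int a b = 2 * integral {0..} (I_integrand a b)"
proof -
  define J where "J = integral {0..} (I_integrand a b)"
  have nonneg_half: "I_integrand a b absolutely_integrable_on {0..}"
    using int by (rule nonnegative_absolutely_integrable_1) (simp add: I_integrand_nonneg)
  then have "(\<lambda>t. I_integrand a b (-t)) absolutely_integrable_on {..0}
      \<and> integral {..0} (\<lambda>t. I_integrand a b (-t)) = J"
    by (subst has_absolute_integral_reflect_real[of "{..0}" "{0..}"]) (auto simp: J_def)
  then have neg_half: "I_integrand a b absolutely_integrable_on {..0}"
      and neg_integral: "integral {..0} (I_integrand a b) = J"
    by (simp_all add: I_integrand_minus)
  have halves: "{..0} \<union> {0..} = (UNIV :: real set)"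
    by auto
  have "(I_integrand a b has_integral J + J) ({..0} \<union> {0..})"
  proof (rule has_integral_Un)
    show "(I_integrand a b has_integral J) {..0}"
      using neg_half neg_integral by (metis absolutely_integrable_on_def integrable_integral)
    show "(I_integrand a b has_integral J) {0..}"
      using int unfolding J_def by (rule integrable_integral)
    show "negligible ({..0} \<inter> {0::real..})"
      by (rule negligible_subset[of "{0}"]) auto
  qed
  then have "integral UNIV (I_integrand a b) = 2 * J"
    unfolding halves by (simp add: integral_unique)
  moreover have "integrable lebesgue (I_integrand a b)"
    using absolutely_integrable_Un[OF neg_half nonneg_half] by (simp add: halves set_integrable_def)
  then have "integral UNIV (I_integrand a b) = integral\<^sup>L lborel (I_integrand a b)"
    by (simp add: integral_lebesgue integral_completion I_integrand_borel_measurable)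
  ultimately show ?thesis
    by (simp add: I_int_def J_def I_integrand_def [abs_def])
qed

lemma I_integrand_eq_sinc_powr:
  assumes "0 < t" "t < pi"
  shows "I_integrand a (a - c) t = (sin t / t) powr a * t powr c"
proof -
  have "sin t > 0"
    using assms by (simp add: sin_gt_zero)
  then show ?thesis
    using assms by (simp add: I_integrand_def powr_divide powr_diff)
qed

lemma I_integrand_le_gauss_moment:
  assumes t: "0 < t" "t \<le> 3 / 2" and a: "a \<ge> 0"
  shows "I_integrand a (a - c) t \<le> gauss_moment (a / 6) c t * exp (a * t ^ 4 / 120)"
proof -
  have "t < pi"
    using t pi_gt3 by linarith
  then have "0 < sin t"
    using t by (simp add: sin_gt_zero)
  then have "(sin t / t) powr a \<le> exp (- t\<^sup>2 / 6 + t ^ 4 / 120) powr a"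
    using t a sinc_le_exp[of t] by (intro powr_mono2) auto
  then have "(sin t / t) powr a * t powr c \<le> exp (a * (- t\<^sup>2 / 6 + t ^ 4 / 120)) * t powr c"
    by (intro mult_right_mono) (simp_all add: exp_powr_real mult.commute)
  then show ?thesis
    using t \<open>t < pi\<close>
    by (simp add: I_integrand_eq_sinc_powr gauss_moment_def algebra_simps flip: exp_add)
qed

lemma gauss_moment_le_I_integrand:
  assumes t: "0 < t" "t \<le> 1" and a: "a \<ge> 0"
  shows "gauss_moment (a / 6) c t * exp (- a * t ^ 4 / 10) \<le> I_integrand a (a - c) t"
proof -
  have "t < pi"
    using t pi_gt3 by linarith
  have "exp (- t\<^sup>2 / 6 - t ^ 4 / 10) powr a \<le> (sin t / t) powr a"
    using t a exp_le_sinc[of t] by (intro powr_mono2) auto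
  then have "exp (a * (- t\<^sup>2 / 6 - t ^ 4 / 10)) * t powr c \<le> (sin t / t) powr a * t powr c"
    by (intro mult_right_mono) (simp_all add: exp_powr_real mult.commute)
  then show ?thesis
    using t \<open>t < pi\<close>
    by (simp add: I_integrand_eq_sinc_powr gauss_moment_def algebra_simps flip: exp_add)
qed

lemma I_integrand_le_near:
  assumes t: "0 < t" "t \<le> \<delta>" "\<delta> \<le> 3 / 2" and a: "a \<ge> 0"
  shows "I_integrand a (a - c) t \<le> exp (a * \<delta> ^ 4 / 120) * gauss_moment (a / 6) c t"
proof -
  have "a * t ^ 4 \<le> a * \<delta> ^ 4"
    using t a by (intro mult_left_mono power_mono) auto
  then have "gauss_moment (a / 6) c t * exp (a * t ^ 4 / 120)
      \<le> exp (a * \<delta> ^ 4 / 120) * gauss_moment (a / 6) c t"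
    by (simp add: mult.commute mult_left_mono gauss_moment_nonneg)
  with I_integrand_le_gauss_moment[of t a c] show ?thesis
    using t a by linarith
qed

lemma I_integrand_le_middle:
  assumes t: "\<delta> \<le> t" "t \<le> 3 / 2" and \<delta>: "0 < \<delta>" and a: "a \<ge> 0"
    and c: "-1 < c" "c \<le> M" and M: "0 \<le> M"
  shows "I_integrand a (a - c) t \<le> (1 / \<delta> + (3 / 2) powr M) * exp (- (a * \<delta>\<^sup>2 / 7))"
proof -
  have "a * (- t\<^sup>2 / 6 + t ^ 4 / 120) \<le> a * (- (\<delta>\<^sup>2 / 7))"
    using quartic_exponent_le[of \<delta> t] t \<delta> a by (intro mult_left_mono) auto
  then have "t powr c * exp (a * (- t\<^sup>2 / 6 + t ^ 4 / 120))
      \<le> (1 / \<delta> + (3 / 2) powr M) * exp (- (a * \<delta>\<^sup>2 / 7))"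
    using powr_le_inverse_plus_powr[of \<delta> t "3 / 2" c M] assms
    by (intro mult_mono) (auto simp: add_nonneg_nonneg)
  moreover have "gauss_moment (a / 6) c t * exp (a * t ^ 4 / 120)
      = t powr c * exp (a * (- t\<^sup>2 / 6 + t ^ 4 / 120))"
    unfolding gauss_moment_def mult.assoc exp_add[symmetric] by (simp add: algebra_simps)
  ultimately show ?thesis
    using I_integrand_le_gauss_moment[of t a c] t \<delta> a by linarith
qed

lemma I_integrand_le_powr:
  assumes "0 < t" "a \<ge> 0"
  shows "I_integrand a b t \<le> t powr (-b)"
proof -
  have "\<bar>sin t\<bar> powr a \<le> 1 powr a"
    using assms by (intro powr_mono2) auto
  then have "\<bar>sin t\<bar> powr a * t powr (-b) \<le> 1 * t powr (-b)"
    by (intro mult_right_mono) auto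
  then show ?thesis
    using assms by (simp add: I_integrand_def)
qed

section \<open>Bounds for the half-line integral\<close>

definition I_majorant :: "real \<Rightarrow> real \<Rightarrow> real \<Rightarrow> real \<Rightarrow> real \<Rightarrow> real" where
  "I_majorant a c M \<delta> t =
      (if t \<in> {0..\<delta>} then exp (a * \<delta> ^ 4 / 120) * gauss_moment (a / 6) c t else 0)
    + (if t \<in> {\<delta>..3 / 2} then (1 / \<delta> + (3 / 2) powr M) * exp (- (a * \<delta>\<^sup>2 / 7)) else 0)
    + (if t \<in> {3 / 2..} then t powr (c - a) else 0)"

lemma I_integrand_le_majorant:
  assumes t: "0 \<le> t" and a: "a \<ge> 0" and c: "-1 < c" "c \<le> M" and M: "0 \<le> M"
    and \<delta>: "0 < \<delta>" "\<delta> \<le> 1"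
  shows "I_integrand a (a - c) t \<le> I_majorant a c M \<delta> t"
proof -
  define near where
    "near = (if t \<in> {0..\<delta>} then exp (a * \<delta> ^ 4 / 120) * gauss_moment (a / 6) c t else 0)"
  define middle where
    "middle = (if t \<in> {\<delta>..3 / 2} then (1 / \<delta> + (3 / 2) powr M) * exp (- (a * \<delta>\<^sup>2 / 7)) else 0)"
  define tail where "tail = (if t \<in> {3 / 2..} then t powr (c - a) else 0)"
  have majorant: "I_majorant a c M \<delta> t = near + middle + tail"
    by (simp add: I_majorant_def near_def middle_def tail_def)
  have "0 \<le> near" "0 \<le> middle" "0 \<le> tail"
    using \<delta> by (simp_all add: near_def middle_def tail_def gauss_moment_nonneg add_nonneg_nonneg)
  moreover consider "t = 0" | "0 < t" "t \<le> \<delta>" | "\<delta> \<le> t" "t \<le> 3 / 2" | "3 / 2 \<le> t"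
    using t by force
  then have "I_integrand a (a - c) t \<le> near \<or> I_integrand a (a - c) t \<le> middle
      \<or> I_integrand a (a - c) t \<le> tail"
  proof cases
    case 1
    then show ?thesis
      using \<delta> by (simp add: near_def gauss_moment_nonneg)
  next
    case 2
    then show ?thesis
      using \<delta> a I_integrand_le_near[of t \<delta> a c] by (simp add: near_def)
  next
    case 3
    then show ?thesis
      using I_integrand_le_middle[OF 3 \<delta>(1) a c M] by (simp add: middle_def)
  next
    case 4
    then show ?thesis
      using a I_integrand_le_powr[of t a "a - c"] by (simp add: tail_def)
  qed
  ultimately show ?thesis
    unfolding majorant by linarith
qed

lemma I_majorant_has_integral:
  assumes a: "a > 0" and c: "-1 < c" and \<delta>: "0 < \<delta>" "\<delta> \<le> 1" and b: "a - c > 1"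
  shows "(I_majorant a c M \<delta> has_integral
            exp (a * \<delta> ^ 4 / 120) * integral {0..\<delta>} (gauss_moment (a / 6) c)
          + (3 / 2 - \<delta>) * ((1 / \<delta> + (3 / 2) powr M) * exp (- (a * \<delta>\<^sup>2 / 7)))
          + (3 / 2) powr (c - a + 1) / (a - c - 1)) {0..}"
proof -
  have "gauss_moment (a / 6) c integrable_on {0..\<delta>}"
    using a c by (intro gauss_moment_integrable_on) auto
  then have "((\<lambda>t. exp (a * \<delta> ^ 4 / 120) * gauss_moment (a / 6) c t) has_integral
      exp (a * \<delta> ^ 4 / 120) * integral {0..\<delta>} (gauss_moment (a / 6) c)) ({0..\<delta>} \<inter> {0..})"
    by (simp add: has_integral_mult_right integrable_integral)
  moreover have "((\<lambda>t. (1 / \<delta> + (3 / 2) powr M) * exp (- (a * \<delta>\<^sup>2 / 7))) has_integral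
      (3 / 2 - \<delta>) * ((1 / \<delta> + (3 / 2) powr M) * exp (- (a * \<delta>\<^sup>2 / 7)))) ({\<delta>..3 / 2} \<inter> {0..})"
    using has_integral_const_real[of "(1 / \<delta> + (3 / 2) powr M) * exp (- (a * \<delta>\<^sup>2 / 7))" \<delta> "3 / 2"] \<delta>
    by (simp add: Int_absorb2)
  moreover have "((\<lambda>t. t powr (c - a)) has_integral (3 / 2) powr (c - a + 1) / (a - c - 1))
      ({3 / 2..} \<inter> {0..})"
  proof -
    have "- ((3 / 2) powr (c - a + 1) / (c - a + 1)) = (3 / 2) powr (c - a + 1) / (a - c - 1)"
      using b by (simp add: field_simps)
    then show ?thesis
      using has_integral_powr_to_inf[of "c - a" "3 / 2"] b by (simp add: Int_absorb2)
  qed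
  ultimately show ?thesis
    unfolding I_majorant_def by (intro has_integral_add) (simp_all only: has_integral_restrict_Int)
qed

lemma I_integrand_integrable_on:
  assumes a: "a > 0" and c: "-1 < c" "a - c > 1"
  shows "I_integrand a (a - c) integrable_on {0..}"
proof (rule measurable_bounded_by_integrable_imp_integrable_real)
  show "I_integrand a (a - c) \<in> borel_measurable (lebesgue_on {0..})"
    by (intro measurable_restrict_space1 measurable_completion) (simp add: I_integrand_borel_measurable)
  show "I_majorant a c \<bar>c\<bar> 1 integrable_on {0..}"
    using I_majorant_has_integral[of a c 1 "\<bar>c\<bar>"] assms by auto
  show "\<bar>I_integrand a (a - c) t\<bar> \<le> I_majorant a c \<bar>c\<bar> 1 t" if "t \<in> {0..}" for t
    using that a c I_integrand_le_majorant[of t a c "\<bar>c\<bar>" 1] by (simp add: I_integrand_nonneg)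
qed simp

lemma integral_I_integrand_le:
  assumes a: "a > 0" and c: "-1 < c" "c \<le> M" and M: "0 \<le> M" and \<delta>: "0 < \<delta>" "\<delta> \<le> 1"
    and b: "a - M \<ge> 2"
  shows "integral {0..} (I_integrand a (a - c))
    \<le> exp (a * \<delta> ^ 4 / 120) * gauss_moment_integral (a / 6) c
      + 3 / 2 * ((1 / \<delta> + (3 / 2) powr M) * exp (- (a * \<delta>\<^sup>2 / 7)))
      + (3 / 2) powr (1 + M - a)"
proof -
  have "integral {0..} (I_integrand a (a - c))
    \<le> exp (a * \<delta> ^ 4 / 120) * integral {0..\<delta>} (gauss_moment (a / 6) c)
      + (3 / 2 - \<delta>) * ((1 / \<delta> + (3 / 2) powr M) * exp (- (a * \<delta>\<^sup>2 / 7)))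
      + (3 / 2) powr (c - a + 1) / (a - c - 1)"
    using assms I_integrand_le_majorant[of _ a c M \<delta>]
    by (intro has_integral_le[OF integrable_integral I_majorant_has_integral])
       (auto intro: I_integrand_integrable_on)
  also have "integral {0..\<delta>} (gauss_moment (a / 6) c) \<le> gauss_moment_integral (a / 6) c"
    using a c by (intro integral_gauss_moment_le) auto
  also have "(3 / 2 - \<delta>) * ((1 / \<delta> + (3 / 2) powr M) * exp (- (a * \<delta>\<^sup>2 / 7)))
      \<le> 3 / 2 * ((1 / \<delta> + (3 / 2) powr M) * exp (- (a * \<delta>\<^sup>2 / 7)))"
    using \<delta> by (intro mult_right_mono) (auto simp: add_nonneg_nonneg)
  also have "(3 / 2) powr (c - a + 1) / (a - c - 1) \<le> (3 / 2) powr (1 + M - a)"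
  proof -
    have "(3 / 2) powr (c - a + 1) / (a - c - 1) \<le> (3 / 2) powr (c - a + 1)"
      using b c by (simp add: divide_le_eq)
    also have "\<dots> \<le> (3 / 2) powr (1 + M - a)"
      using c by (intro powr_mono) auto
    finally show ?thesis .
  qed
  finally show ?thesis
    by simp
qed

lemma integral_I_integrand_ge:
  assumes a: "a > 0" and c: "-1 < c" "c \<le> M" and \<delta>: "0 < \<delta>" "\<delta> \<le> 1" and b: "a - c > 1"
  shows "exp (- (a * \<delta> ^ 4 / 10)) * (1 - exp (- (a * \<delta>\<^sup>2 / 12)) * 2 powr ((M + 1) / 2))
           * gauss_moment_integral (a / 6) c
         \<le> integral {0..} (I_integrand a (a - c))"
proof -
  define H where "H = gauss_moment_integral (a / 6) c"
  have "(1 - exp (- (a * \<delta>\<^sup>2 / 12)) * 2 powr ((M + 1) / 2)) * H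
      \<le> integral {0..\<delta>} (gauss_moment (a / 6) c)"
    using gauss_moment_initial_part_ge[of "a / 6" c M \<delta>] a c \<delta> by (simp add: H_def)
  then have "exp (- (a * \<delta> ^ 4 / 10)) * (1 - exp (- (a * \<delta>\<^sup>2 / 12)) * 2 powr ((M + 1) / 2)) * H
      \<le> integral {0..\<delta>} (\<lambda>t. exp (- (a * \<delta> ^ 4 / 10)) * gauss_moment (a / 6) c t)"
    by (simp add: mult.assoc mult_left_mono)
  also have "\<dots> \<le> integral {0..\<delta>} (I_integrand a (a - c))"
  proof (rule integral_le)
    show "(\<lambda>t. exp (- (a * \<delta> ^ 4 / 10)) * gauss_moment (a / 6) c t) integrable_on {0..\<delta>}"
      using a c by (intro integrable_on_mult_right gauss_moment_integrable_on) auto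
    show "I_integrand a (a - c) integrable_on {0..\<delta>}"
      using I_integrand_integrable_on[OF a c(1) b] by (rule integrable_on_subinterval) auto
    show "exp (- (a * \<delta> ^ 4 / 10)) * gauss_moment (a / 6) c t \<le> I_integrand a (a - c) t"
      if "t \<in> {0..\<delta>}" for t
    proof (cases "t = 0")
      case False
      with that have t: "0 < t" "t \<le> \<delta>"
        by auto
      then have "a * t ^ 4 \<le> a * \<delta> ^ 4"
        using a by (intro mult_left_mono power_mono) auto
      then have "exp (- (a * \<delta> ^ 4 / 10)) * gauss_moment (a / 6) c t
          \<le> gauss_moment (a / 6) c t * exp (- a * t ^ 4 / 10)"
        by (simp add: mult.commute mult_left_mono gauss_moment_nonneg)
      also have "\<dots> \<le> I_integrand a (a - c) t"
        using t \<delta> a by (intro gauss_moment_le_I_integrand) auto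
      finally show ?thesis .
    qed (simp add: gauss_moment_def)
  qed
  also have "\<dots> \<le> integral {0..} (I_integrand a (a - c))"
    using I_integrand_integrable_on[OF a c(1) b]
    by (intro integral_subset_le) (auto intro: integrable_on_subinterval simp: I_integrand_nonneg)
  finally show ?thesis
    by (simp add: H_def)
qed

section \<open>The asymptotic ratio\<close>

lemma I_ratio_eq:
  assumes a: "a > 0" and c: "-1 < c" "a - c > 1"
  shows "I_int a (a - c) / ((6 / a) powr ((c + 1) / 2) * Gamma ((c + 1) / 2))
    = integral {0..} (I_integrand a (a - c)) / gauss_moment_integral (a / 6) c"
proof -
  have "(6 / a) powr ((c + 1) / 2) * Gamma ((c + 1) / 2) = 2 * gauss_moment_integral (a / 6) c"
    using a by (simp add: gauss_moment_integral_def powr_divide)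
  then show ?thesis
    using I_int_eq_twice_half_line[OF I_integrand_integrable_on[OF a c]] by simp
qed

text \<open>The last factor of the upper bound is the reciprocal of the lower bound for
  \<open>gauss_moment_integral (a / 6) c\<close> from \<open>gauss_moment_integral_ge\<close>.\<close>

definition ratio_upper_bound :: "real \<Rightarrow> real \<Rightarrow> real \<Rightarrow> real" where
  "ratio_upper_bound M a \<delta> = exp (a * \<delta> ^ 4 / 120)
    + (3 / 2 * ((1 / \<delta> + (3 / 2) powr M) * exp (- (a * \<delta>\<^sup>2 / 7))) + (3 / 2) powr (1 + M - a))
      * (exp 1 * (M + 1) * (a / 6) powr ((M + 1) / 2))"

definition ratio_lower_bound :: "real \<Rightarrow> real \<Rightarrow> real \<Rightarrow> real" where
  "ratio_lower_bound M a \<delta> = exp (- (a * \<delta> ^ 4 / 10)) * (1 - exp (- (a * \<delta>\<^sup>2 / 12)) * 2 powr ((M + 1) / 2))"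

lemma I_ratio_le_upper_bound:
  assumes a: "a \<ge> 6" and c: "-1 < c" "c \<le> M" and M: "0 \<le> M" and \<delta>: "0 < \<delta>" "\<delta> \<le> 1"
    and b: "a - M \<ge> 2"
  shows "integral {0..} (I_integrand a (a - c)) / gauss_moment_integral (a / 6) c
    \<le> ratio_upper_bound M a \<delta>"
proof -
  define H where "H = gauss_moment_integral (a / 6) c"
  define rest where
    "rest = 3 / 2 * ((1 / \<delta> + (3 / 2) powr M) * exp (- (a * \<delta>\<^sup>2 / 7))) + (3 / 2) powr (1 + M - a)"
  define m where "m = exp (-1) * (a / 6) powr (- ((M + 1) / 2)) / (M + 1)"
  have H: "0 < H"
    using a c by (simp add: H_def gauss_moment_integral_pos)
  have m: "0 < m" "m \<le> H"
    using a c M gauss_moment_integral_ge[of "a / 6" c M] by (simp_all add: m_def H_def)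
  have "rest \<ge> 0"
    using \<delta> by (simp add: rest_def)
  then have "rest / H \<le> rest / m"
    using H m by (intro divide_left_mono) auto
  also have "rest / m = rest * (exp 1 * (M + 1) * (a / 6) powr ((M + 1) / 2))"
    using a M by (simp add: m_def powr_minus exp_minus field_simps)
  finally have "rest / H \<le> rest * (exp 1 * (M + 1) * (a / 6) powr ((M + 1) / 2))" .
  moreover have "integral {0..} (I_integrand a (a - c)) / H \<le> (exp (a * \<delta> ^ 4 / 120) * H + rest) / H"
    using integral_I_integrand_le[of a c M \<delta>] assms H
    by (intro divide_right_mono) (simp_all add: H_def rest_def)
  moreover have "(exp (a * \<delta> ^ 4 / 120) * H + rest) / H = exp (a * \<delta> ^ 4 / 120) + rest / H"
    using H by (simp add: field_simps)
  ultimately show ?thesis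
    unfolding ratio_upper_bound_def H_def rest_def by linarith
qed

lemma I_ratio_ge_lower_bound:
  assumes a: "a > 0" and c: "-1 < c" "c \<le> M" and \<delta>: "0 < \<delta>" "\<delta> \<le> 1" and b: "a - c > 1"
  shows "ratio_lower_bound M a \<delta>
    \<le> integral {0..} (I_integrand a (a - c)) / gauss_moment_integral (a / 6) c"
  using integral_I_integrand_ge[OF assms] gauss_moment_integral_pos[of "a / 6" c] a c
  by (simp add: ratio_lower_bound_def pos_le_divide_eq)

lemma ratio_upper_bound_tendsto: "M \<ge> 0 \<Longrightarrow> ((\<lambda>a. ratio_upper_bound M a (a powr (-1 / 3))) \<longlongrightarrow> 1) at_top"
  unfolding ratio_upper_bound_def by real_asymp

lemma ratio_lower_bound_tendsto: "((\<lambda>a. ratio_lower_bound M a (a powr (-1 / 3))) \<longlongrightarrow> 1) at_top"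
  unfolding ratio_lower_bound_def by real_asymp

lemma I_ratio_tendsto_1:
  fixes \<beta> :: "real \<Rightarrow> real"
  assumes "\<forall>\<^sub>F \<alpha> in at_top. -1 < \<alpha> - \<beta> \<alpha> \<and> \<alpha> - \<beta> \<alpha> \<le> M"
  shows "((\<lambda>\<alpha>. I_int \<alpha> (\<beta> \<alpha>) /
            ((6 / \<alpha>) powr ((\<alpha> - \<beta> \<alpha> + 1) / 2) * Gamma ((\<alpha> - \<beta> \<alpha> + 1) / 2))) \<longlongrightarrow> 1) at_top"
proof (rule tendsto_sandwich[OF _ _ ratio_lower_bound_tendsto ratio_upper_bound_tendsto])
  \<comment> \<open>\<open>\<delta> = \<alpha> powr (-1/3)\<close> makes \<open>\<alpha> \<delta>\<^sup>4 \<rightarrow> 0\<close> while \<open>\<alpha> \<delta>\<^sup>2 \<rightarrow> \<infinity>\<close>.\<close>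
  have bounds: "ratio_lower_bound \<bar>M\<bar> \<alpha> (\<alpha> powr (-1 / 3))
      \<le> I_int \<alpha> (\<beta> \<alpha>) / ((6 / \<alpha>) powr ((\<alpha> - \<beta> \<alpha> + 1) / 2) * Gamma ((\<alpha> - \<beta> \<alpha> + 1) / 2))
    \<and> I_int \<alpha> (\<beta> \<alpha>) / ((6 / \<alpha>) powr ((\<alpha> - \<beta> \<alpha> + 1) / 2) * Gamma ((\<alpha> - \<beta> \<alpha> + 1) / 2))
      \<le> ratio_upper_bound \<bar>M\<bar> \<alpha> (\<alpha> powr (-1 / 3))"
    if c: "-1 < \<alpha> - \<beta> \<alpha>" "\<alpha> - \<beta> \<alpha> \<le> M" and \<alpha>: "\<alpha> \<ge> max 6 (\<bar>M\<bar> + 2)" for \<alpha>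
  proof -
    define c where "c = \<alpha> - \<beta> \<alpha>"
    have \<beta>: "\<beta> \<alpha> = \<alpha> - c"
      by (simp add: c_def)
    have \<delta>: "0 < \<alpha> powr (-1 / 3)" "\<alpha> powr (-1 / 3) \<le> 1"
      using \<alpha> powr_mono[of "-1 / 3" 0 \<alpha>] by auto
    have c': "-1 < c" "c \<le> \<bar>M\<bar>" "\<alpha> - c > 1" and \<alpha>_pos: "\<alpha> > 0"
      using c \<alpha> by (auto simp: c_def)
    show ?thesis
      unfolding c_def[symmetric] unfolding \<beta> I_ratio_eq[OF \<alpha>_pos c'(1,3)]
      using I_ratio_le_upper_bound[of \<alpha> c "\<bar>M\<bar>" "\<alpha> powr (-1 / 3)"] I_ratio_ge_lower_bound[of \<alpha> c "\<bar>M\<bar>"]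
        \<alpha> \<delta> c'
      by simp
  qed
  show "\<forall>\<^sub>F \<alpha> in at_top. ratio_lower_bound \<bar>M\<bar> \<alpha> (\<alpha> powr (-1 / 3))
      \<le> I_int \<alpha> (\<beta> \<alpha>) / ((6 / \<alpha>) powr ((\<alpha> - \<beta> \<alpha> + 1) / 2) * Gamma ((\<alpha> - \<beta> \<alpha> + 1) / 2))"
    using assms eventually_ge_at_top[of "max 6 (\<bar>M\<bar> + 2)"] by eventually_elim (use bounds in blast)
  show "\<forall>\<^sub>F \<alpha> in at_top. I_int \<alpha> (\<beta> \<alpha>) / ((6 / \<alpha>) powr ((\<alpha> - \<beta> \<alpha> + 1) / 2) * Gamma ((\<alpha> - \<beta> \<alpha> + 1) / 2))
      \<le> ratio_upper_bound \<bar>M\<bar> \<alpha> (\<alpha> powr (-1 / 3))"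
    using assms eventually_ge_at_top[of "max 6 (\<bar>M\<bar> + 2)"] by eventually_elim (use bounds in blast)
qed simp

theorem mainTheorem6:
  fixes \<beta> :: "real \<Rightarrow> real" and M :: real
  assumes "\<forall>\<^sub>F \<alpha> in at_top. -1 < \<alpha> - \<beta> \<alpha> \<and> \<alpha> - \<beta> \<alpha> \<le> M"
  shows "((\<lambda>\<alpha>. I_int \<alpha> (\<beta> \<alpha>) /
            ((6 / \<alpha>) powr ((\<alpha> - \<beta> \<alpha> + 1) / 2) * Gamma ((\<alpha> - \<beta> \<alpha> + 1) / 2)))
           \<longlongrightarrow> 1) at_top
       \<and> ((\<lambda>\<alpha>. I_int \<alpha> (of_int \<lfloor>\<alpha>\<rfloor>) /
            ((6 / \<alpha>) powr ((\<alpha> - of_int \<lfloor>\<alpha>\<rfloor> + 1) / 2) * Gamma ((\<alpha> - of_int \<lfloor>\<alpha>\<rfloor> + 1) / 2)))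
           \<longlongrightarrow> 1) at_top"
proof
  show "((\<lambda>\<alpha>. I_int \<alpha> (\<beta> \<alpha>) /
            ((6 / \<alpha>) powr ((\<alpha> - \<beta> \<alpha> + 1) / 2) * Gamma ((\<alpha> - \<beta> \<alpha> + 1) / 2)))
           \<longlongrightarrow> 1) at_top"
    using assms by (rule I_ratio_tendsto_1)
  have "-1 < \<alpha> - of_int \<lfloor>\<alpha>\<rfloor> \<and> \<alpha> - of_int \<lfloor>\<alpha>\<rfloor> \<le> 1" for \<alpha> :: real
    using of_int_floor_le[of \<alpha>] real_of_int_floor_add_one_ge[of \<alpha>] by linarith
  then have "\<forall>\<^sub>F \<alpha> in at_top. -1 < \<alpha> - of_int \<lfloor>\<alpha>\<rfloor> \<and> \<alpha> - of_int \<lfloor>\<alpha>\<rfloor> \<le> (1 :: real)"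
    by simp
  then show "((\<lambda>\<alpha>. I_int \<alpha> (of_int \<lfloor>\<alpha>\<rfloor>) /
            ((6 / \<alpha>) powr ((\<alpha> - of_int \<lfloor>\<alpha>\<rfloor> + 1) / 2) * Gamma ((\<alpha> - of_int \<lfloor>\<alpha>\<rfloor> + 1) / 2)))
           \<longlongrightarrow> 1) at_top"
    by (rule I_ratio_tendsto_1)
qed

end
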